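(* Fix $\epsilon>0$, a unitary $2\times2$ operator $R$ with $\det R=1$, and a Clifford+$T$ operator $U$. The following are equivalent: (1) there exists a unit scalar $\lambda$ such that $\|R-\lambda U\|\le\epsilon$; (2) there exists $n\in\mathbb Z$ such that $\|R-e^{in\pi/8}U\|\le\epsilon$.
   Context: Let $\omega=e^{i\pi/4}$, $H=\frac{1}{\sqrt2}\begin{bmatrix}1&1\\1&-1\end{bmatrix}$, $S=\begin{bmatrix}1&0\\0&i\end{bmatrix}$, $T=\begin{bmatrix}1&0\\0&\omega\end{bmatrix}$. A Clifford+$T$ operator is an element of the group generated by $\omega I$, $H$, $S$, $T$. $\|\cdot\|$ denotes the operator norm on $2\times2$ complex matrices. *)

theory Defs
  imports "HOL-Analysis.Analysis"
begin

type_synonym cmat2 = "complex^2^2"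

definition mat2 :: "complex \<Rightarrow> complex \<Rightarrow> complex \<Rightarrow> complex \<Rightarrow> cmat2" where
  "mat2 a b c d = (\<chi> i j. if i = 1 then (if j = 1 then a else b) else (if j = 1 then c else d))"

definition omega :: complex where "omega = exp (\<i> * of_real (pi / 4))"

definition Hgate :: cmat2 where
  "Hgate = mat2 (1 / of_real (sqrt 2)) (1 / of_real (sqrt 2)) (1 / of_real (sqrt 2)) (- 1 / of_real (sqrt 2))"

definition Sgate :: cmat2 where "Sgate = mat2 1 0 0 \<i>"

definition Tgate :: cmat2 where "Tgate = mat2 1 0 0 omega"

definition generator :: "cmat2 \<Rightarrow> bool" where
  "generator G \<longleftrightarrow> G = mat omega \<or> G = Hgate \<or> G = Sgate \<or> G = Tgate"

text \<open>The group generated by omega I, H, S, T (closure under left multiplication by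
  generators and their inverses, starting from the identity).\<close>
inductive clifford_T :: "cmat2 \<Rightarrow> bool" where
  ident: "clifford_T (mat 1)"
| gen: "generator G \<Longrightarrow> clifford_T U \<Longrightarrow> clifford_T (G ** U)"
| gen_inv: "generator G \<Longrightarrow> clifford_T U \<Longrightarrow> clifford_T (matrix_inv G ** U)"

definition adjoint2 :: "cmat2 \<Rightarrow> cmat2" where
  "adjoint2 A = (\<chi> i j. cnj (A $ j $ i))"

definition unitary2 :: "cmat2 \<Rightarrow> bool" where
  "unitary2 A \<longleftrightarrow> A ** adjoint2 A = mat 1 \<and> adjoint2 A ** A = mat 1"

text \<open>Operator norm w.r.t. the Euclidean norm on complex^2.\<close>
definition opnorm :: "cmat2 \<Rightarrow> real" where
  "opnorm A = onorm (\<lambda>x::complex^2. A *v x)"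

end

theory Submission
  imports Defs
begin

text \<open>A Clifford+T operator \<open>U\<close> is unitary and \<open>det U\<close> is a power of \<open>\<omega> = e^{i\<pi>/4}\<close>, so some
  \<open>\<mu> = e^{in\<pi>/8}\<close> satisfies \<open>\<mu>\<^sup>2 det U = 1\<close>. Multiplying on the left by the unitary
  \<open>\<mu>\<^sup>* U\<^sup>*\<close> turns \<open>\<parallel>R - \<lambda>U\<parallel>\<close> into \<open>\<parallel>W - \<lambda>\<mu>\<^sup>*\<parallel>\<close> with \<open>W = \<mu>\<^sup>* U\<^sup>* R \<in> SU(2)\<close>.
  If \<open>a\<close> is the top-left entry of \<open>W \<in> SU(2)\<close>, then \<open>W - \<nu>\<close> has norm at least
  \<open>\<surd>(2 - 2|Re a|)\<close> for every unit scalar \<open>\<nu>\<close>, and this bound is attained by the nearer of \<open>\<plusminus>1\<close>.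
  So \<open>\<lambda>\<close> may be replaced by \<open>\<plusminus>\<mu>\<close>, which is again of the form \<open>e^{in\<pi>/8}\<close>.\<close>

lemma cmat2_eq_iff:
  "(A::cmat2) = B \<longleftrightarrow> A$1$1 = B$1$1 \<and> A$1$2 = B$1$2 \<and> A$2$1 = B$2$1 \<and> A$2$2 = B$2$2"
  by (auto simp: vec_eq_iff forall_2)

lemma matrix_mult_cmat2_entry: "((A::cmat2) ** B)$i$j = A$i$1 * B$1$j + A$i$2 * B$2$j"
  by (simp add: matrix_matrix_mult_def sum_2)

lemma matrix_vector_mult_cmat2_entry: "((A::cmat2) *v x)$i = A$i$1 * x$1 + A$i$2 * x$2"
  by (simp add: matrix_vector_mult_def sum_2)

lemma mat_cmat2_entries:
  "(mat c :: cmat2)$1$1 = c" "(mat c :: cmat2)$1$2 = 0" "(mat c :: cmat2)$2$1 = 0" "(mat c :: cmat2)$2$2 = c"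
  by (simp_all add: mat_def)

lemma mat2_entries:
  "mat2 a b c d $1$1 = a" "mat2 a b c d $1$2 = b" "mat2 a b c d $2$1 = c" "mat2 a b c d $2$2 = d"
  by (simp_all add: mat2_def)

lemma adjoint2_entry: "adjoint2 A $ i $ j = cnj (A$j$i)"
  by (simp add: adjoint2_def)

lemmas cmat2_simps = matrix_mult_cmat2_entry mat_cmat2_entries mat2_entries adjoint2_entry

lemma norm_cvec2_sq: "complex_of_real ((norm (x::complex^2))^2) = x$1 * cnj (x$1) + x$2 * cnj (x$2)"
proof -
  have "(norm x)^2 = (cmod (x$1))^2 + (cmod (x$2))^2"
    by (simp add: norm_vec_def L2_set_def sum_2)
  then show ?thesis
    by (simp only: of_real_add complex_norm_square)
qed

lemma norm_axis_cvec2: "norm (axis i (1::complex) :: complex^2) = 1"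
  using exhaust_2[of i] by (auto simp: norm_vec_def L2_set_def axis_def sum_2)

lemma mat_mult_mat: "mat a ** (mat b :: cmat2) = mat (a * b)"
  by (simp add: cmat2_eq_iff cmat2_simps)

lemma mat_mult_commute: "mat c ** (A::cmat2) = A ** mat c"
  by (simp add: cmat2_eq_iff cmat2_simps mult.commute)

lemma matrix_mult_diff_distrib: "(A::cmat2) ** (B - C) = A ** B - A ** C"
  by (simp add: matrix_matrix_mult_def vec_eq_iff sum_subtractf right_diff_distrib)

lemma det_mat_cmat2: "det (mat c :: cmat2) = c^2"
  by (simp add: det_2 mat_cmat2_entries power2_eq_square)

lemma det_adjoint2: "det (adjoint2 A) = cnj (det A)"
  by (simp add: det_2 adjoint2_entry)

lemma adjoint2_mult: "adjoint2 ((A::cmat2) ** B) = adjoint2 B ** adjoint2 A"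
  by (simp add: cmat2_eq_iff cmat2_simps mult.commute)

lemma adjoint2_adjoint2: "adjoint2 (adjoint2 A) = A"
  by (simp add: cmat2_eq_iff adjoint2_entry)

lemma unitary2_mult: "unitary2 A \<Longrightarrow> unitary2 B \<Longrightarrow> unitary2 (A ** B)"
  unfolding unitary2_def adjoint2_mult by (metis matrix_mul_assoc matrix_mul_rid)

lemma unitary2_adjoint2: "unitary2 A \<Longrightarrow> unitary2 (adjoint2 A)"
  unfolding unitary2_def adjoint2_adjoint2 by simp

lemma unitary2_mat: "cmod c = 1 \<Longrightarrow> unitary2 (mat c)"
  by (simp add: unitary2_def cmat2_eq_iff cmat2_simps complex_norm_square[symmetric] mult.commute)

lemma matrix_inv_unitary2:
  assumes "unitary2 G"
  shows "matrix_inv G = adjoint2 G"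
proof -
  have "\<exists>A'. G ** A' = mat 1 \<and> A' ** G = mat 1"
    using assms unitary2_def by blast
  then have "matrix_inv G ** G = mat 1"
    unfolding matrix_inv_def by (rule someI2_ex) blast
  then have "matrix_inv G ** (G ** adjoint2 G) = adjoint2 G"
    by (simp add: matrix_mul_assoc)
  then show ?thesis
    using assms unfolding unitary2_def by simp
qed

lemma unitary2_entries:
  assumes "unitary2 U"
  shows "cnj (U$1$1) * U$1$1 + cnj (U$2$1) * U$2$1 = 1"
    "cnj (U$1$1) * U$1$2 + cnj (U$2$1) * U$2$2 = 0"
    "cnj (U$1$2) * U$1$1 + cnj (U$2$2) * U$2$1 = 0"
    "cnj (U$1$2) * U$1$2 + cnj (U$2$2) * U$2$2 = 1"
    "U$1$1 * cnj (U$1$1) + U$1$2 * cnj (U$1$2) = 1"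
    "U$1$1 * cnj (U$2$1) + U$1$2 * cnj (U$2$2) = 0"
    "U$2$1 * cnj (U$1$1) + U$2$2 * cnj (U$1$2) = 0"
    "U$2$1 * cnj (U$2$1) + U$2$2 * cnj (U$2$2) = 1"
  using assms unfolding unitary2_def cmat2_eq_iff by (simp_all add: cmat2_simps)

lemma unitary2_norm_preserving:
  assumes "unitary2 U"
  shows "norm (U *v x) = norm x"
proof -
  have "complex_of_real ((norm (U *v x))^2) = complex_of_real ((norm x)^2)"
    unfolding norm_cvec2_sq matrix_vector_mult_cmat2_entry
    using unitary2_entries[OF assms] by simp algebra
  then have "(norm (U *v x))^2 = (norm x)^2"
    by (simp only: of_real_eq_iff)
  then show ?thesis
    by (simp add: power2_eq_iff_nonneg)
qed

lemma opnorm_unitary2_mult_left: "unitary2 Y \<Longrightarrow> opnorm (Y ** A) = opnorm A"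
  by (simp add: opnorm_def onorm_def unitary2_norm_preserving flip: matrix_vector_mul_assoc)

lemma norm_le_opnorm: "norm (x::complex^2) = 1 \<Longrightarrow> norm (A *v x) \<le> opnorm A"
  using onorm[OF matrix_vector_mul_bounded_linear[of A], of x] by (simp add: opnorm_def)

lemma special_unitary2_entries:
  assumes "unitary2 W" "det W = 1"
  shows "W$2$2 = cnj (W$1$1)" "W$2$1 = - cnj (W$1$2)"
proof -
  note u = unitary2_entries[OF assms(1)]
  have d: "W$1$1 * W$2$2 - W$1$2 * W$2$1 = 1"
    using assms(2) by (simp add: det_2)
  show "W$2$2 = cnj (W$1$1)" using u d by algebra
  show "W$2$1 = - cnj (W$1$2)" using u d by algebra
qed

text \<open>For \<open>W \<in> SU(2)\<close> one has \<open>W + W\<^sup>* = 2 Re(W\<^sub>1\<^sub>1) I\<close>, so \<open>W - t\<close> is a multiple of a unitary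
  for real \<open>t\<close>.\<close>

lemma special_unitary2_minus_real:
  assumes "unitary2 W" "det W = 1"
  shows "(norm ((W - mat (of_real t)) *v x))^2 = (1 + t^2 - 2 * t * Re (W$1$1)) * (norm x)^2"
proof -
  define a b where "a = W$1$1" and "b = W$1$2"
  note W = special_unitary2_entries[OF assms, folded a_def b_def]
  have ab: "a * cnj a + b * cnj b = 1"
    using unitary2_entries(5)[OF assms(1)] by (simp add: a_def b_def)
  have "complex_of_real ((norm ((W - mat (of_real t)) *v x))^2)
      = ((a - t) * x$1 + b * x$2) * cnj ((a - t) * x$1 + b * x$2)
        + (- cnj b * x$1 + (cnj a - t) * x$2) * cnj (- cnj b * x$1 + (cnj a - t) * x$2)"
    unfolding norm_cvec2_sq matrix_vector_mult_cmat2_entry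
    by (simp add: W mat_cmat2_entries a_def b_def)
  also have "\<dots> = (1 + t^2 - t * (a + cnj a)) * (x$1 * cnj (x$1) + x$2 * cnj (x$2))"
    using ab by simp algebra
  also have "\<dots> = complex_of_real ((1 + t^2 - 2 * t * Re a) * (norm x)^2)"
    unfolding of_real_mult norm_cvec2_sq complex_add_cnj by simp
  finally show ?thesis
    by (simp only: of_real_eq_iff a_def)
qed

lemma special_unitary2_minus_unit_axis:
  assumes "unitary2 W" "det W = 1" "cmod \<nu> = 1"
  shows "(norm ((W - mat \<nu>) *v axis 1 1))^2 = 2 - 2 * Re (W$1$1 * cnj \<nu>)"
    and "(norm ((W - mat \<nu>) *v axis 2 1))^2 = 2 - 2 * Re (W$1$1 * \<nu>)"
proof -
  define a b where "a = W$1$1" and "b = W$1$2"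
  note W = special_unitary2_entries[OF assms(1,2), folded a_def b_def]
  have ab: "a * cnj a + b * cnj b = 1"
    using unitary2_entries(5)[OF assms(1)] by (simp add: a_def b_def)
  have \<nu>: "\<nu> * cnj \<nu> = 1"
    using assms(3) by (simp add: complex_norm_square[symmetric])
  have "complex_of_real ((norm ((W - mat \<nu>) *v axis 1 1))^2)
      = (a - \<nu>) * cnj (a - \<nu>) + cnj b * b"
    unfolding norm_cvec2_sq matrix_vector_mult_cmat2_entry
    by (simp add: W mat_cmat2_entries axis_def a_def b_def)
  also have "\<dots> = (a * cnj a + b * cnj b) + \<nu> * cnj \<nu> - (a * cnj \<nu> + cnj (a * cnj \<nu>))"
    by (simp only: complex_cnj_diff complex_cnj_mult complex_cnj_cnj) algebra
  also have "\<dots> = 2 - (a * cnj \<nu> + cnj (a * cnj \<nu>))"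
    by (simp add: ab \<nu>)
  finally have "complex_of_real ((norm ((W - mat \<nu>) *v axis 1 1))^2) = of_real (2 - 2 * Re (a * cnj \<nu>))"
    by (simp only: complex_add_cnj of_real_diff of_real_numeral)
  then show "(norm ((W - mat \<nu>) *v axis 1 1))^2 = 2 - 2 * Re (W$1$1 * cnj \<nu>)"
    by (simp only: of_real_eq_iff a_def)
  have "complex_of_real ((norm ((W - mat \<nu>) *v axis 2 1))^2)
      = b * cnj b + (cnj a - \<nu>) * cnj (cnj a - \<nu>)"
    unfolding norm_cvec2_sq matrix_vector_mult_cmat2_entry
    by (simp add: W mat_cmat2_entries axis_def a_def b_def)
  also have "\<dots> = (a * cnj a + b * cnj b) + \<nu> * cnj \<nu> - (a * \<nu> + cnj (a * \<nu>))"
    by (simp only: complex_cnj_diff complex_cnj_mult complex_cnj_cnj) algebra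
  also have "\<dots> = 2 - (a * \<nu> + cnj (a * \<nu>))"
    by (simp add: ab \<nu>)
  finally have "complex_of_real ((norm ((W - mat \<nu>) *v axis 2 1))^2) = of_real (2 - 2 * Re (a * \<nu>))"
    by (simp only: complex_add_cnj of_real_diff of_real_numeral)
  then show "(norm ((W - mat \<nu>) *v axis 2 1))^2 = 2 - 2 * Re (W$1$1 * \<nu>)"
    by (simp only: of_real_eq_iff a_def)
qed


lemma special_unitary2_nearest_sign:
  assumes "unitary2 W" "det W = 1" "cmod \<nu> = 1"
  shows "\<exists>s\<in>{1, -1}. opnorm (W - mat (of_real s)) \<le> opnorm (W - mat \<nu>)"
proof -
  define t where "t = Re (W$1$1)"
  define s :: real where "s = (if t \<ge> 0 then 1 else -1)"
  have s_shift: "(norm ((W - mat (of_real s)) *v x))^2 = (2 - 2 * \<bar>t\<bar>) * (norm x)^2" for x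
    using special_unitary2_minus_real[OF assms(1,2), of s x] by (simp add: s_def t_def)
  have "0 \<le> 2 - 2 * \<bar>t\<bar>"
    using s_shift[of "axis 1 1"] zero_le_power2[of "norm ((W - mat (of_real s)) *v axis 1 1)"]
    by (simp add: norm_axis_cvec2)
  define r where "r = sqrt (2 - 2 * \<bar>t\<bar>)"
  have r: "0 \<le> r" "r^2 = 2 - 2 * \<bar>t\<bar>"
    using \<open>0 \<le> 2 - 2 * \<bar>t\<bar>\<close> by (simp_all add: r_def)
  have "norm ((W - mat (of_real s)) *v x) = r * norm x" for x
  proof -
    have "(norm ((W - mat (of_real s)) *v x))^2 = (r * norm x)^2"
      using s_shift[of x] r(2) by (simp add: power_mult_distrib)
    then show ?thesis
      using r(1) by (simp add: power2_eq_iff_nonneg)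
  qed
  then have upper: "opnorm (W - mat (of_real s)) \<le> r"
    unfolding opnorm_def by (intro onorm_le) simp
  have "\<bar>Re \<nu>\<bar> \<le> 1"
    using abs_Re_le_cmod[of \<nu>] assms(3) by simp
  have "t * Re \<nu> \<le> \<bar>t\<bar> * \<bar>Re \<nu>\<bar>"
    by (metis abs_ge_self abs_mult)
  also have "\<dots> \<le> \<bar>t\<bar>"
    using \<open>\<bar>Re \<nu>\<bar> \<le> 1\<close> by (simp add: mult_left_le)
  finally have "Re (W$1$1 * cnj \<nu>) + Re (W$1$1 * \<nu>) \<le> 2 * \<bar>t\<bar>"
    by (simp add: t_def mult.commute)
  \<comment> \<open>the two basis vectors average to \<open>2 - 2 Re a Re \<nu> \<ge> 2 - 2|Re a|\<close>\<close>
  then obtain i where "r^2 \<le> (norm ((W - mat \<nu>) *v axis i 1))^2"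
    using special_unitary2_minus_unit_axis[OF assms] r(2) by (smt (verit))
  then have "r \<le> norm ((W - mat \<nu>) *v axis i 1)"
    using r(1) by (simp add: power2_le_iff_abs_le)
  also have "\<dots> \<le> opnorm (W - mat \<nu>)"
    by (rule norm_le_opnorm[OF norm_axis_cvec2])
  finally have "opnorm (W - mat (of_real s)) \<le> opnorm (W - mat \<nu>)"
    using upper by linarith
  moreover have "s \<in> {1, -1}"
    by (simp add: s_def)
  ultimately show ?thesis
    by blast
qed


lemma omega_power: "omega ^ n = exp (\<i> * of_real (real n * pi / 4))"
proof -
  have "omega ^ n = exp (of_nat n * (\<i> * of_real (pi / 4)))"
    unfolding omega_def by (rule exp_of_nat_mult[symmetric])
  then show ?thesis
    by (simp add: field_simps)
qed

lemma omega_power_8: "omega ^ 8 = 1"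
  by (simp add: omega_power exp_eq_polar cis_2pi)

lemma cmod_omega: "cmod omega = 1"
  unfolding omega_def by (rule norm_exp_i_times)

lemma cnj_omega: "cnj omega = omega ^ 7"
proof -
  have "omega * omega ^ 7 = 1"
    using omega_power_8 by (simp flip: power_Suc)
  moreover have "omega * cnj omega = 1"
    using cmod_omega by (simp flip: complex_norm_square)
  ultimately show ?thesis
    by (metis mult.left_commute mult.right_neutral)
qed

lemma omega_power_2: "omega ^ 2 = \<i>"
  by (simp add: omega_power exp_eq_polar)

lemma omega_power_4: "omega ^ 4 = -1"
  by (simp add: omega_power exp_eq_polar)

lemma sqrt2_mult_sqrt2_complex: "complex_of_real (sqrt 2) * complex_of_real (sqrt 2) = 2"
  by (simp flip: of_real_mult)

lemma unitary2_Hgate: "unitary2 Hgate"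
  by (simp add: unitary2_def cmat2_eq_iff Hgate_def cmat2_simps sqrt2_mult_sqrt2_complex divide_simps)

lemma unitary2_Sgate: "unitary2 Sgate"
  by (simp add: unitary2_def cmat2_eq_iff Sgate_def cmat2_simps)

lemma unitary2_Tgate: "unitary2 Tgate"
  using cmod_omega
  by (simp add: unitary2_def cmat2_eq_iff Tgate_def cmat2_simps complex_norm_square[symmetric] mult.commute)

lemma det_Hgate: "det Hgate = omega ^ 4"
  by (simp add: omega_power_4 Hgate_def det_2 mat2_entries sqrt2_mult_sqrt2_complex divide_simps)

lemma det_Sgate: "det Sgate = omega ^ 2"
  by (simp add: omega_power_2 Sgate_def det_2 mat2_entries)

lemma det_Tgate: "det Tgate = omega ^ 1"
  by (simp add: Tgate_def det_2 mat2_entries)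

lemma generator_unitary2: "generator G \<Longrightarrow> unitary2 G"
  unfolding generator_def
  using unitary2_mat[OF cmod_omega] unitary2_Hgate unitary2_Sgate unitary2_Tgate by blast

lemma generator_det_omega_power: "generator G \<Longrightarrow> \<exists>k. det G = omega ^ k"
  unfolding generator_def using det_mat_cmat2 det_Hgate det_Sgate det_Tgate by blast

lemma clifford_T_unitary2: "clifford_T U \<Longrightarrow> unitary2 U"
  by (induction rule: clifford_T.induct)
    (auto simp: unitary2_mat unitary2_mult generator_unitary2 matrix_inv_unitary2 unitary2_adjoint2)

lemma clifford_T_det_omega_power: "clifford_T U \<Longrightarrow> \<exists>k. det U = omega ^ k"
proof (induction rule: clifford_T.induct)
  case ident
  show ?case
    by (rule exI[of _ 0]) (simp add: det_mat_cmat2)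
next
  case (gen G U)
  then show ?case
    using generator_det_omega_power by (metis det_mul power_add)
next
  case (gen_inv G U)
  obtain j k where "det G = omega ^ j" "det U = omega ^ k"
    using gen_inv generator_det_omega_power by blast
  then have "det (matrix_inv G ** U) = omega ^ (7 * j + k)"
    using gen_inv(1)
    by (simp add: matrix_inv_unitary2 generator_unitary2 det_mul det_adjoint2 cnj_omega
        power_add power_mult)
  then show ?case ..
qed

lemma clifford_T_det_phase:
  assumes "clifford_T U"
  shows "\<exists>n::int. exp (\<i> * of_real (of_int n * pi / 8)) ^ 2 * det U = 1"
proof -
  obtain k where k: "det U = omega ^ k"
    using clifford_T_det_omega_power[OF assms] ..
  have "exp (\<i> * of_real (of_int (int (7 * k)) * pi / 8)) ^ 2 = omega ^ (7 * k)"
    by (simp add: omega_power exp_of_nat_mult[symmetric] field_simps)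
  then have "exp (\<i> * of_real (of_int (int (7 * k)) * pi / 8)) ^ 2 * det U = omega ^ (8 * k)"
    by (simp add: k flip: power_add)
  also have "\<dots> = 1"
    by (simp add: power_mult omega_power_8)
  finally show ?thesis
    by (rule exI)
qed


lemma sign_phase_reduction:
  assumes "unitary2 R" "det R = 1" "unitary2 U" "cmod \<mu> = 1" "\<mu>^2 * det U = 1" "cmod c = 1"
  shows "\<exists>s\<in>{1, -1}. opnorm (R - mat (of_real s * \<mu>) ** U) \<le> opnorm (R - mat c ** U)"
proof -
  define Y where "Y = mat (cnj \<mu>) ** adjoint2 U"
  define W where "W = Y ** R"
  have Y: "unitary2 Y"
    unfolding Y_def using assms(3,4) by (simp add: unitary2_mult unitary2_mat unitary2_adjoint2)
  have YU: "Y ** U = mat (cnj \<mu>)"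
    using assms(3) unfolding Y_def unitary2_def by (metis matrix_mul_assoc matrix_mul_rid)
  have "unitary2 W"
    unfolding W_def using Y assms(1) by (rule unitary2_mult)
  moreover have "det W = 1"
    using assms(2,5) by (simp add: W_def Y_def det_mul det_mat_cmat2 det_adjoint2
        flip: complex_cnj_power complex_cnj_mult)
  moreover have "cmod (c * cnj \<mu>) = 1"
    using assms(4,6) by (simp add: norm_mult)
  ultimately obtain s where s: "s \<in> {1, -1}"
    and nearest: "opnorm (W - mat (of_real s)) \<le> opnorm (W - mat (c * cnj \<mu>))"
    using special_unitary2_nearest_sign by blast
  have rotate: "opnorm (R - mat d ** U) = opnorm (W - mat (d * cnj \<mu>))" for d
  proof -
    have "Y ** (mat d ** U) = mat d ** (Y ** U)"
      by (metis matrix_mul_assoc mat_mult_commute)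
    then have "Y ** (R - mat d ** U) = W - mat d ** (Y ** U)"
      by (simp add: W_def matrix_mult_diff_distrib)
    then show ?thesis
      using opnorm_unitary2_mult_left[OF Y] by (metis YU mat_mult_mat)
  qed
  have "\<mu> * cnj \<mu> = 1"
    using assms(4) by (simp flip: complex_norm_square)
  then have "opnorm (R - mat (of_real s * \<mu>) ** U) = opnorm (W - mat (of_real s))"
    by (simp add: rotate mult.assoc)
  then show ?thesis
    using s nearest rotate[of c] by auto
qed

lemma exp_pi_8_add_8: "exp (\<i> * of_real (of_int (n + 8) * pi / 8)) = - exp (\<i> * of_real (of_int n * pi / 8))"
proof -
  have "exp (\<i> * of_real (of_int (n + 8) * pi / 8)) = exp (\<i> * of_real (of_int n * pi / 8) + of_real pi * \<i>)"
    by (simp add: field_simps)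
  then show ?thesis
    by (simp add: exp_add)
qed

theorem lemma7p18:
  fixes \<epsilon> :: real and R U :: cmat2
  assumes "\<epsilon> > 0" and "unitary2 R" and "det R = 1" and "clifford_T U"
  shows "(\<exists>c::complex. norm c = 1 \<and> opnorm (R - mat c ** U) \<le> \<epsilon>) \<longleftrightarrow>
         (\<exists>n::int. opnorm (R - mat (exp (\<i> * of_real (of_int n * pi / 8))) ** U) \<le> \<epsilon>)"
proof
  assume "\<exists>n::int. opnorm (R - mat (exp (\<i> * of_real (of_int n * pi / 8))) ** U) \<le> \<epsilon>"
  then show "\<exists>c::complex. norm c = 1 \<and> opnorm (R - mat c ** U) \<le> \<epsilon>"
    by (metis norm_exp_i_times)
next
  assume "\<exists>c::complex. norm c = 1 \<and> opnorm (R - mat c ** U) \<le> \<epsilon>"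
  then obtain c where c: "norm c = 1" "opnorm (R - mat c ** U) \<le> \<epsilon>"
    by blast
  let ?phase = "\<lambda>n::int. exp (\<i> * of_real (of_int n * pi / 8))"
  obtain n where n: "?phase n ^ 2 * det U = 1"
    using clifford_T_det_phase[OF assms(4)] ..
  obtain s where "s \<in> {1, -1}" and s: "opnorm (R - mat (of_real s * ?phase n) ** U) \<le> \<epsilon>"
    using sign_phase_reduction[OF assms(2,3) clifford_T_unitary2[OF assms(4)] norm_exp_i_times n c(1)] c(2)
    by fastforce
  then have "of_real s * ?phase n = ?phase n \<or> of_real s * ?phase n = ?phase (n + 8)"
    using exp_pi_8_add_8[of n] by auto
  then show "\<exists>n::int. opnorm (R - mat (?phase n) ** U) \<le> \<epsilon>"
    using s by metis
qed

end
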